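(* Under the hypotheses and notation of the context, assume moreover that $u$ is analytic in the annulus $q<|z|<1$. Then for every $n\ge2$ with $\phi_k(0)\ne0$ for $1\le k\le n$, $$B_n+B_{n-1}-\frac{\kappa_{n-1}}{\kappa_{n-2}}\frac{A_{n-1}}{z}-\frac{\kappa_n}{\kappa_{n-2}}\frac{\phi_{n-1}(0)}{\phi_n(0)}A_{n-1}=-\frac{n-1}{qz}-\frac{u(qz)}{q}-\frac{1-q}{q}\sum_{j=0}^{n-1}\Big[B_{j+1}-\frac{\kappa_j}{\kappa_{j-1}}\frac{A_j}{z}\Big],$$ where all $A_k,B_k$ are evaluated at $z$ and the $j=0$ summand is interpreted as $B_1(z)+M_1(z)$.
   Context: Let $0<q<1$. Let $w$ be a positive weight on the unit circle normalized by $\int_{|\zeta|=1}w(\zeta)\frac{d\zeta}{i\zeta}=1$ (contour integrals counterclockwise), analytic in $q<|z|<1$ and continuous on its boundary, with orthonormal polynomials $\phi_n(z)=\kappa_nz^n+\cdots$, $\kappa_n>0$, $\int_{|\zeta|=1}\phi_m\overline{\phi_n}w\frac{d\zeta}{i\zeta}=\delta_{m,n}$. For $f(z)=\sum_{k=0}^na_kz^k$ of degree $n$, $f^*(z)=\sum_{k=0}^n\overline{a_k}z^{n-k}$. $(D_qf)(z)=\frac{f(z)-f(qz)}{z-qz}$, and $u$ is defined by $(D_qw)(z)=-u(qz)w(qz)$. For $k\ge1$ with $\phi_k(0)\neq0$, $$A_k(z)=\frac{\kappa_{k-1}}{\kappa_k}\frac{1-q^k}{1-q}+i\frac{\kappa_{k-1}}{\phi_k(0)}z\int_{|\zeta|=1}\frac{u(\zeta)-u(qz)}{\zeta-qz}\phi_k(\zeta)\overline{\phi_k^*(q\zeta)}w(\zeta)\,d\zeta,$$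 $$B_k(z)=-i\int_{|\zeta|=1}\frac{u(\zeta)-u(qz)}{\zeta-qz}\phi_k(\zeta)\Big[\overline{\phi_k(q\zeta)}-\frac{\kappa_k}{\phi_k(0)}\overline{\phi_k^*(q\zeta)}\Big]w(\zeta)\,d\zeta,$$ so that $(D_q\phi_k)(z)=A_k(z)\phi_{k-1}(z)-B_k(z)\phi_k(z)$. Also $M_1(z)=\int_{|\zeta|=1}\zeta\frac{u(\zeta)-u(qz)}{\zeta-qz}w(\zeta)\frac{d\zeta}{i\zeta}$. *)

theory Defs
  imports "HOL-Complex_Analysis.Complex_Analysis" "HOL-Computational_Algebra.Polynomial"
begin

definition pstar :: "complex poly \<Rightarrow> complex \<Rightarrow> complex" where
  "pstar p z = (\<Sum>k\<le>degree p. cnj (coeff p k) * z ^ (degree p - k))"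

definition Dq :: "real \<Rightarrow> (complex \<Rightarrow> complex) \<Rightarrow> complex \<Rightarrow> complex" where
  "Dq q f z = (f z - f (of_real q * z)) / (z - of_real q * z)"

definition annulus :: "real \<Rightarrow> complex set" where
  "annulus q = {z. q < norm z \<and> norm z < 1}"

definition cannulus :: "real \<Rightarrow> complex set" where
  "cannulus q = {z. q \<le> norm z \<and> norm z \<le> 1}"

definition kap :: "(nat \<Rightarrow> complex poly) \<Rightarrow> nat \<Rightarrow> complex" where
  "kap \<phi> n = lead_coeff (\<phi> n)"

definition coefA ::
  "real \<Rightarrow> (complex \<Rightarrow> complex) \<Rightarrow> (complex \<Rightarrow> complex) \<Rightarrow> (nat \<Rightarrow> complex poly)
    \<Rightarrow> nat \<Rightarrow> complex \<Rightarrow> complex" where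
  "coefA q w u \<phi> k z =
     kap \<phi> (k - 1) / kap \<phi> k * ((1 - of_real q ^ k) / (1 - of_real q))
     + \<i> * kap \<phi> (k - 1) / poly (\<phi> k) 0 * z *
       contour_integral (circlepath 0 1)
         (\<lambda>\<zeta>. (u \<zeta> - u (of_real q * z)) / (\<zeta> - of_real q * z) * poly (\<phi> k) \<zeta>
                * cnj (pstar (\<phi> k) (of_real q * \<zeta>)) * w \<zeta>)"

definition coefB ::
  "real \<Rightarrow> (complex \<Rightarrow> complex) \<Rightarrow> (complex \<Rightarrow> complex) \<Rightarrow> (nat \<Rightarrow> complex poly)
    \<Rightarrow> nat \<Rightarrow> complex \<Rightarrow> complex" where
  "coefB q w u \<phi> k z =
     - \<i> * contour_integral (circlepath 0 1)
         (\<lambda>\<zeta>. (u \<zeta> - u (of_real q * z)) / (\<zeta> - of_real q * z) * poly (\<phi> k) \<zeta>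
                * (cnj (poly (\<phi> k) (of_real q * \<zeta>))
                   - kap \<phi> k / poly (\<phi> k) 0 * cnj (pstar (\<phi> k) (of_real q * \<zeta>)))
                * w \<zeta>)"

definition coefM1 ::
  "real \<Rightarrow> (complex \<Rightarrow> complex) \<Rightarrow> (complex \<Rightarrow> complex) \<Rightarrow> complex \<Rightarrow> complex" where
  "coefM1 q w u z =
     contour_integral (circlepath 0 1)
       (\<lambda>\<zeta>. \<zeta> * ((u \<zeta> - u (of_real q * z)) / (\<zeta> - of_real q * z)) * w \<zeta> / (\<i> * \<zeta>))"

end

(*
  Both A_k and B_k are integrals Lambda(F) = \<oint> (u(\<zeta>) - u(qz)) / (\<zeta> - qz) w(\<zeta>) F(\<zeta>) d\<zeta>
  of explicit integrands built from \<phi>_k(\<zeta>), \<phi>_k(q\<zeta>) and \<phi>*_k(q\<zeta>).  The Szego recurrence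
  together with one step of the Christoffel-Darboux formula expresses the integrand of B_{k+2}
  through the integrands of B_k, A_k, A_{k+1} and \<zeta> times those of A_k, A_{k+1}.  Writing
  \<zeta> = (\<zeta> - qz) + qz cancels the denominator of the kernel, and the two resulting integrals
  \<oint> w \<phi>_k conj(\<phi>*_k(q\<zeta>)) and \<oint> u w \<phi>_k conj(\<phi>*_k(q\<zeta>)) are explicit: the first by
  orthogonality, the second because the q-difference equation defining u replaces u w by a
  difference of values of w, after the contour is moved across the annulus by Cauchy's theorem.
  The result is a recurrence in n that telescopes to the stated identity, starting from n = 2,
  which follows from the first Christoffel-Darboux step in the same way.
*)

theory Submission
  imports Defs
begin

section \<open>Contour integrals over the unit circle and an annulus\<close>

lemma cnj_unit_circle: "norm \<zeta> = 1 \<Longrightarrow> cnj \<zeta> = inverse \<zeta>"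
  using divide_conv_cnj[of \<zeta> 1] by (simp add: inverse_eq_divide)

lemma contour_integral_circlepath_0_integral:
  "contour_integral (circlepath 0 r) f =
     integral {0..1} (\<lambda>t. f (of_real r * exp (2 * of_real pi * \<i> * of_real t)) *
       (2 * of_real pi * \<i> * of_real r * exp (2 * of_real pi * \<i> * of_real t)))"
  unfolding contour_integral_integral vector_derivative_circlepath
  by (simp add: circlepath)

lemma contour_integral_circlepath_rescale:
  "contour_integral (circlepath 0 r) f =
     contour_integral (circlepath 0 1) (\<lambda>\<zeta>. of_real r * f (of_real r * \<zeta>))"
  unfolding contour_integral_circlepath_0_integral by (intro integral_cong) (simp add: algebra_simps)

lemma contour_integral_unit_circle_cnj:
  "contour_integral (circlepath 0 1) (\<lambda>\<zeta>. cnj (G \<zeta>) / (\<i> * \<zeta>))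
     = cnj (contour_integral (circlepath 0 1) (\<lambda>\<zeta>. G \<zeta> / (\<i> * \<zeta>)))"
proof -
  let ?e = "\<lambda>t::real. exp (2 * of_real pi * \<i> * of_real t)"
  have "contour_integral (circlepath 0 1) (\<lambda>\<zeta>. cnj (G \<zeta>) / (\<i> * \<zeta>))
        = integral {0..1} (\<lambda>t. cnj (2 * of_real pi * G (?e t)))"
    unfolding contour_integral_circlepath_0_integral by (intro integral_cong) (simp add: field_simps)
  also have "\<dots> = cnj (integral {0..1} (\<lambda>t. 2 * of_real pi * G (?e t)))"
    by (simp add: integral_cnj)
  also have "integral {0..1} (\<lambda>t. 2 * of_real pi * G (?e t))
        = contour_integral (circlepath 0 1) (\<lambda>\<zeta>. G \<zeta> / (\<i> * \<zeta>))"
    unfolding contour_integral_circlepath_0_integral by (intro integral_cong) (simp add: field_simps)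
  finally show ?thesis .
qed

lemma open_annulus: "open (annulus q)"
  unfolding annulus_def by (intro open_Collect_conj open_Collect_less continuous_intros)

lemma homotopic_loops_circlepath_annulus:
  assumes "0 \<le> q" and r: "q < r" "r < 1" and s: "q < s" "s < 1"
  shows "homotopic_loops (annulus q) (circlepath 0 r) (circlepath 0 s)"
proof (rule homotopic_loops_linear[OF _ _ _ _ subsetI])
  fix t :: real and x assume "x \<in> closed_segment (circlepath 0 r t) (circlepath 0 s t)"
  then obtain v where v: "0 \<le> v" "v \<le> 1"
    and x: "x = of_real ((1 - v) * r + v * s) * exp (2 * of_real pi * \<i> * of_real t)"
    by (auto simp: in_segment circlepath scaleR_conv_of_real algebra_simps)
  define \<rho> where "\<rho> = (1 - v) * r + v * s"
  have "\<rho> < 1" "(1 - v) * (- r) + v * (- s) < - q"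
    unfolding \<rho>_def using r s v by (intro convex_bound_lt; simp)+
  then have "q < \<rho>" "\<rho> < 1" by (simp_all add: \<rho>_def)
  then show "x \<in> annulus q"
    using \<open>0 \<le> q\<close> unfolding x \<rho>_def[symmetric] annulus_def by (simp add: norm_mult norm_exp_eq_Re)
qed auto

lemma continuous_on_circlepath_integral_radius:
  assumes "0 \<le> q" and f: "continuous_on (cannulus q) f"
  shows "continuous_on {q..1} (\<lambda>r. contour_integral (circlepath 0 r) f)"
proof -
  let ?e = "\<lambda>t::real. exp (2 * of_real pi * \<i> * of_real t)"
  have "(\<lambda>x. of_real (fst x) * ?e (snd x)) ` ({q..1} \<times> cbox 0 1) \<subseteq> cannulus q"
    using \<open>0 \<le> q\<close> by (auto simp: cannulus_def norm_mult norm_exp_eq_Re)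
  then have "continuous_on ({q..1} \<times> cbox 0 1) (\<lambda>x. f (of_real (fst x) * ?e (snd x)))"
    by (intro continuous_on_compose2[OF f]) (auto intro!: continuous_intros)
  then have "continuous_on ({q..1} \<times> cbox 0 1)
      (\<lambda>(r, t). f (of_real r * ?e t) * (2 * of_real pi * \<i> * of_real r * ?e t))"
    unfolding case_prod_beta by (intro continuous_intros)
  from integral_continuous_on_param[OF this] show ?thesis
    unfolding contour_integral_circlepath_0_integral by simp
qed

lemma contour_integral_circlepath_annulus:
  assumes q: "0 < q" "q < 1"
    and hol: "f holomorphic_on annulus q" and cont: "continuous_on (cannulus q) f"
  shows "contour_integral (circlepath 0 1) f = contour_integral (circlepath 0 q) f"
proof -
  define \<Phi> where "\<Phi> r = contour_integral (circlepath 0 r) f" for r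
  define r0 where "r0 = (q + 1) / 2"
  have r0: "q < r0" "r0 < 1" using q by (auto simp: r0_def)
  have "\<Phi> r = \<Phi> r0" if "r \<in> {q<..<1}" for r
    unfolding \<Phi>_def using that r0 q
    by (intro Cauchy_theorem_homotopic_loops[OF homotopic_loops_circlepath_annulus open_annulus hol])
      auto
  then have "{q<..<1} \<subseteq> {r \<in> {q..1}. \<Phi> r = \<Phi> r0}" by auto
  moreover have "closed {r \<in> {q..1}. \<Phi> r = \<Phi> r0}"
    unfolding \<Phi>_def using q
    by (intro continuous_closed_preimage_constant continuous_on_circlepath_integral_radius cont) auto
  ultimately have "closure {q<..<1} \<subseteq> {r \<in> {q..1}. \<Phi> r = \<Phi> r0}"
    by (rule closure_minimal)
  then have "\<Phi> 1 = \<Phi> r0" "\<Phi> q = \<Phi> r0" using q by (auto simp: subset_iff)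
  then show ?thesis by (simp add: \<Phi>_def)
qed

lemma contour_integral_unit_circle_annulus_rescale:
  assumes "0 < q" "q < 1"
    and "f holomorphic_on annulus q" "continuous_on (cannulus q) f"
  shows "contour_integral (circlepath 0 1) f
       = contour_integral (circlepath 0 1) (\<lambda>\<zeta>. of_real q * f (of_real q * \<zeta>))"
  using contour_integral_circlepath_annulus[OF assms] contour_integral_circlepath_rescale by simp

section \<open>Reversed polynomials\<close>

text \<open>The polynomial star_poly k p is z^k conj(p(1 / conj z)), the reversed polynomial p* of the
  paper taken with respect to a formal degree k; unlike \<^const>\<open>pstar\<close> it is conjugate-linear in p.\<close>

definition star_poly :: "nat \<Rightarrow> complex poly \<Rightarrow> complex poly" where
  "star_poly k p = (\<Sum>i\<le>k. monom (cnj (coeff p i)) (k - i))"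

lemma coeff_star_poly:
  "coeff (star_poly k p) j = (if j \<le> k then cnj (coeff p (k - j)) else 0)"
proof -
  have "coeff (star_poly k p) j = (\<Sum>i\<in>{..k} \<inter> {i. k - i = j}. cnj (coeff p i))"
    by (simp add: star_poly_def coeff_sum coeff_monom sum.If_cases)
  also have "{..k} \<inter> {i. k - i = j} = (if j \<le> k then {k - j} else {})"
    by auto
  finally show ?thesis by simp
qed

lemma degree_star_poly_le: "degree (star_poly k p) \<le> k"
  by (rule degree_le) (simp add: coeff_star_poly)

lemma pstar_eq_poly_star_poly: "pstar p = poly (star_poly (degree p) p)"
  by (simp add: fun_eq_iff pstar_def star_poly_def poly_sum poly_monom)

lemma star_poly_0_one: "star_poly 0 1 = 1"
  by (simp add: star_poly_def)

lemma star_poly_add: "star_poly k (p + r) = star_poly k p + star_poly k r"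
  by (rule poly_eqI) (simp add: coeff_star_poly)

lemma star_poly_smult: "star_poly k (smult c p) = smult (cnj c) (star_poly k p)"
  by (rule poly_eqI) (simp add: coeff_star_poly)

lemma star_poly_pCons_0: "star_poly (Suc k) (pCons 0 p) = star_poly k p"
  by (rule poly_eqI) (simp add: coeff_star_poly coeff_pCons Suc_diff_le split: nat.split)

lemma star_poly_Suc: "degree p \<le> k \<Longrightarrow> star_poly (Suc k) p = pCons 0 (star_poly k p)"
  by (rule poly_eqI) (auto simp: coeff_star_poly coeff_pCons coeff_eq_0 split: nat.split)

lemma star_poly_star_poly: "degree p \<le> k \<Longrightarrow> star_poly k (star_poly k p) = p"
  by (rule poly_eqI) (auto simp: coeff_star_poly coeff_eq_0)

lemma poly_star_poly:
  assumes "y \<noteq> 0" "degree p \<le> k"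
  shows "poly (star_poly k p) y = y ^ k * cnj (poly p (inverse (cnj y)))"
proof -
  have "poly (star_poly k p) y = (\<Sum>i\<le>k. y ^ k * cnj (coeff p i * inverse (cnj y) ^ i))"
    unfolding star_poly_def poly_sum poly_monom
    using \<open>y \<noteq> 0\<close> by (intro sum.cong refl) (simp add: power_diff power_inverse field_simps)
  also have "\<dots> = y ^ k * cnj (\<Sum>i\<le>k. coeff p i * inverse (cnj y) ^ i)"
    by (simp add: sum_distrib_left)
  also have "(\<Sum>i\<le>k. coeff p i * inverse (cnj y) ^ i) = poly p (inverse (cnj y))"
    by (subst (2) poly_as_sum_of_monoms'[OF assms(2), symmetric]) (simp add: poly_sum poly_monom)
  finally show ?thesis .
qed

lemma poly_star_poly_unit_circle:
  assumes "norm y = 1" "degree p \<le> k"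
  shows "poly (star_poly k p) y = y ^ k * cnj (poly p y)"
proof -
  have "y \<noteq> 0"
    using assms(1) by auto
  then show ?thesis
    using assms poly_star_poly[of y p k] by (simp add: cnj_unit_circle)
qed

lemma degree_pcompose_linear_le: "degree (p \<circ>\<^sub>p [:0, c:]) \<le> degree (p :: 'a::comm_semiring_1 poly)"
  by (rule degree_le) (simp add: coeff_pcompose_linear coeff_eq_0)

section \<open>Orthonormal polynomials on the unit circle\<close>

locale opuc =
  fixes w :: "complex \<Rightarrow> complex" and \<phi> :: "nat \<Rightarrow> complex poly"
  assumes w_real: "\<And>\<zeta>. norm \<zeta> = 1 \<Longrightarrow> w \<zeta> \<in> \<real>"
    and w_cont: "continuous_on (sphere 0 1) w"
    and w_norm: "contour_integral (circlepath 0 1) (\<lambda>\<zeta>. w \<zeta> / (\<i> * \<zeta>)) = 1"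
    and phi_deg: "\<And>m. degree (\<phi> m) = m"
    and phi_lead: "\<And>m. lead_coeff (\<phi> m) \<in> \<real> \<and> 0 < Re (lead_coeff (\<phi> m))"
    and phi_orth: "\<And>m k. contour_integral (circlepath 0 1)
                      (\<lambda>\<zeta>. poly (\<phi> m) \<zeta> * cnj (poly (\<phi> k) \<zeta>) * w \<zeta> / (\<i> * \<zeta>))
                    = (if m = k then 1 else 0)"
begin

abbreviation \<kappa> :: "nat \<Rightarrow> complex" where "\<kappa> k \<equiv> kap \<phi> k"
abbreviation \<alpha> :: "nat \<Rightarrow> complex" where "\<alpha> k \<equiv> poly (\<phi> k) 0"
abbreviation \<phi>s :: "nat \<Rightarrow> complex poly" where "\<phi>s k \<equiv> star_poly k (\<phi> k)"

lemma pstar_phi: "pstar (\<phi> k) = poly (\<phi>s k)"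
  by (simp add: pstar_eq_poly_star_poly phi_deg)

lemma kappa_real: "cnj (\<kappa> k) = \<kappa> k"
  using phi_lead[of k] by (simp add: kap_def Reals_cnj_iff)

lemma kappa_nonzero: "\<kappa> k \<noteq> 0"
  using phi_lead[of k] by (auto simp: kap_def)

lemma coeff_phi_degree: "coeff (\<phi> k) k = \<kappa> k"
  using phi_deg[of k] by (simp add: kap_def)

lemma coeff_phi_0: "coeff (\<phi> k) 0 = \<alpha> k"
  by (simp add: poly_0_coeff_0)

lemma coeff_phis_0: "coeff (\<phi>s k) 0 = \<kappa> k"
  by (simp add: coeff_star_poly coeff_phi_degree kappa_real)

lemma poly_phis_0: "poly (\<phi>s k) 0 = \<kappa> k"
  by (simp add: poly_0_coeff_0 coeff_phis_0)

lemma coeff_phis_degree: "coeff (\<phi>s k) k = cnj (\<alpha> k)"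
  by (simp add: coeff_star_poly coeff_phi_0)

lemma degree_phis_le: "degree (\<phi>s k) \<le> k"
  by (rule degree_star_poly_le)

lemma poly_phis_unit_circle: "norm \<zeta> = 1 \<Longrightarrow> poly (\<phi>s k) \<zeta> = \<zeta> ^ k * cnj (poly (\<phi> k) \<zeta>)"
  by (simp add: poly_star_poly_unit_circle phi_deg)

definition inner_w :: "complex poly \<Rightarrow> complex poly \<Rightarrow> complex" where
  "inner_w p r = contour_integral (circlepath 0 1) (\<lambda>\<zeta>. poly p \<zeta> * cnj (poly r \<zeta>) * w \<zeta> / (\<i> * \<zeta>))"

lemma inner_w_phi: "inner_w (\<phi> m) (\<phi> k) = (if m = k then 1 else 0)"
  unfolding inner_w_def using phi_orth .

lemma contour_integrable_unit_circle:
  "continuous_on (sphere 0 1) F \<Longrightarrow> F contour_integrable_on circlepath 0 1"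
  by (rule contour_integrable_continuous_circlepath) simp

lemma contour_integrable_inner_w:
  "(\<lambda>\<zeta>. poly p \<zeta> * cnj (poly r \<zeta>) * w \<zeta> / (\<i> * \<zeta>)) contour_integrable_on circlepath 0 1"
  using w_cont by (intro contour_integrable_unit_circle continuous_intros) auto

lemma inner_w_0_left: "inner_w 0 p = 0"
  by (simp add: inner_w_def)

lemma inner_w_add_left: "inner_w (p + r) s = inner_w p s + inner_w r s"
  unfolding inner_w_def
  by (simp add: distrib_right add_divide_distrib contour_integral_add contour_integrable_inner_w)

lemma inner_w_diff_left: "inner_w (p - r) s = inner_w p s - inner_w r s"
  unfolding inner_w_def
  by (simp add: left_diff_distrib diff_divide_distrib contour_integral_diff contour_integrable_inner_w)

lemma inner_w_smult_left: "inner_w (smult c p) s = c * inner_w p s"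
proof -
  have "contour_integral (circlepath 0 1) (\<lambda>\<zeta>. c * (poly p \<zeta> * cnj (poly s \<zeta>) * w \<zeta> / (\<i> * \<zeta>)))
      = c * inner_w p s"
    unfolding inner_w_def by (rule contour_integral_lmul[OF contour_integrable_inner_w])
  then show ?thesis
    unfolding inner_w_def by (simp add: mult.assoc)
qed

lemma inner_w_commute: "inner_w r p = cnj (inner_w p r)"
proof -
  have "inner_w r p = contour_integral (circlepath 0 1)
          (\<lambda>\<zeta>. cnj (poly p \<zeta> * cnj (poly r \<zeta>) * w \<zeta>) / (\<i> * \<zeta>))"
    unfolding inner_w_def
    by (intro contour_integral_eq) (simp add: w_real Reals_cnj_iff[THEN iffD1] mult_ac)
  also have "\<dots> = cnj (inner_w p r)"
    unfolding inner_w_def by (rule contour_integral_unit_circle_cnj)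
  finally show ?thesis .
qed

lemma inner_w_pCons_0: "inner_w (pCons 0 p) (pCons 0 r) = inner_w p r"
  unfolding inner_w_def
proof (intro contour_integral_eq)
  fix \<zeta> assume "\<zeta> \<in> path_image (circlepath 0 1)"
  then have "\<zeta> * cnj \<zeta> = 1"
    using complex_norm_square[of \<zeta>] by simp
  moreover have "poly (pCons 0 p) \<zeta> * cnj (poly (pCons 0 r) \<zeta>) = (\<zeta> * cnj \<zeta>) * (poly p \<zeta> * cnj (poly r \<zeta>))"
    by (simp add: mult_ac)
  ultimately show "poly (pCons 0 p) \<zeta> * cnj (poly (pCons 0 r) \<zeta>) * w \<zeta> / (\<i> * \<zeta>)
      = poly p \<zeta> * cnj (poly r \<zeta>) * w \<zeta> / (\<i> * \<zeta>)"
    by (simp only: mult_1_left)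
qed

lemma phi_expansion:
  assumes "\<And>i. d \<le> i \<Longrightarrow> coeff g i = 0"
  shows "\<exists>c. g = (\<Sum>i<d. smult (c i) (\<phi> i))"
  using assms
proof (induction d arbitrary: g)
  case 0
  then show ?case by (auto intro: poly_eqI)
next
  case (Suc d)
  define c\<^sub>d where "c\<^sub>d = coeff g d / \<kappa> d"
  have "coeff (g - smult c\<^sub>d (\<phi> d)) i = 0" if "d \<le> i" for i
    using that Suc.prems[of i] kappa_nonzero[of d] phi_deg[of d]
    by (cases "i = d") (auto simp: c\<^sub>d_def coeff_phi_degree coeff_eq_0)
  then obtain c where "g - smult c\<^sub>d (\<phi> d) = (\<Sum>i<d. smult (c i) (\<phi> i))"
    using Suc.IH by blast
  then have "g = (\<Sum>i<Suc d. smult ((c(d := c\<^sub>d)) i) (\<phi> i))"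
    by (simp add: algebra_simps)
  then show ?case by blast
qed

lemma inner_w_phi_expansion:
  "inner_w (\<Sum>i<d. smult (c i) (\<phi> i)) (\<phi> j) = (if j < d then c j else 0)"
  by (induction d) (auto simp: inner_w_add_left inner_w_smult_left inner_w_phi inner_w_0_left less_Suc_eq)

lemma inner_w_phi_poly:
  assumes "degree g \<le> k"
  shows "inner_w (\<phi> k) g = cnj (coeff g k) / \<kappa> k"
proof -
  obtain c where c: "g = (\<Sum>i<Suc k. smult (c i) (\<phi> i))"
    using phi_expansion[of "Suc k" g] assms by (auto simp: coeff_eq_0)
  have "inner_w g (\<phi> k) = c k"
    unfolding c inner_w_phi_expansion by simp
  then have "inner_w (\<phi> k) g = cnj (c k)"
    by (simp add: inner_w_commute[of "\<phi> k"])
  moreover have "coeff g k = c k * \<kappa> k"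
    unfolding c using phi_deg by (simp add: coeff_sum coeff_eq_0 coeff_phi_degree)
  ultimately show ?thesis
    using kappa_nonzero[of k] by (simp add: kappa_real)
qed

lemma inner_w_phi_poly_eq_0: "degree g < k \<Longrightarrow> inner_w (\<phi> k) g = 0"
  by (simp add: inner_w_phi_poly coeff_eq_0)

lemma poly_eq_0_if_orthogonal:
  assumes "\<And>i. d \<le> i \<Longrightarrow> coeff g i = 0"
    and orth: "\<And>i. i < d \<Longrightarrow> inner_w g (\<phi> i) = 0"
  shows "g = 0"
proof -
  obtain c where c: "g = (\<Sum>i<d. smult (c i) (\<phi> i))"
    using phi_expansion assms(1) by blast
  have "c i = 0" if "i < d" for i
    using orth[OF that] that unfolding c inner_w_phi_expansion by simp
  then show ?thesis by (simp add: c)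
qed

lemma inner_w_phis_poly:
  assumes "degree g \<le> k"
  shows "inner_w (\<phi>s k) g = cnj (coeff g 0) / \<kappa> k"
proof -
  have "inner_w (\<phi>s k) g = inner_w (star_poly k g) (\<phi> k)"
    unfolding inner_w_def
    by (intro contour_integral_eq) (simp add: poly_phis_unit_circle poly_star_poly_unit_circle assms)
  also have "\<dots> = cnj (inner_w (\<phi> k) (star_poly k g))"
    by (rule inner_w_commute)
  also have "\<dots> = cnj (coeff g 0) / \<kappa> k"
    by (simp add: inner_w_phi_poly degree_star_poly_le coeff_star_poly kappa_real)
  finally show ?thesis .
qed

lemma phi_0: "\<phi> 0 = 1"
proof -
  have "\<phi> 0 = [:\<kappa> 0:]"
    using degree_0_id[OF phi_deg[of 0]] coeff_phi_degree[of 0] by simp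
  moreover have "inner_w [:\<kappa> 0:] [:\<kappa> 0:] = \<kappa> 0 * \<kappa> 0"
  proof -
    have "inner_w [:\<kappa> 0:] [:\<kappa> 0:]
        = contour_integral (circlepath 0 1) (\<lambda>\<zeta>. (\<kappa> 0 * \<kappa> 0) * (w \<zeta> / (\<i> * \<zeta>)))"
      unfolding inner_w_def by (simp add: kappa_real)
    also have "\<dots> = \<kappa> 0 * \<kappa> 0"
      using w_cont w_norm
      by (subst contour_integral_lmul) (auto intro!: contour_integrable_unit_circle continuous_intros)
    finally show ?thesis .
  qed
  ultimately have "\<kappa> 0 * \<kappa> 0 = 1"
    using inner_w_phi[of 0 0] by simp
  then have "\<kappa> 0 = 1"
    using phi_lead[of 0] by (auto simp: square_eq_1_iff kap_def)
  with \<open>\<phi> 0 = [:\<kappa> 0:]\<close> show ?thesis by (simp add: one_pCons)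
qed

lemma kappa_0: "\<kappa> 0 = 1"
  using coeff_phi_degree[of 0] by (simp add: phi_0)

lemma szego_recurrence:
  "smult (\<kappa> k) (\<phi> (Suc k)) = smult (\<kappa> (Suc k)) (pCons 0 (\<phi> k)) + smult (\<alpha> (Suc k)) (\<phi>s k)"
proof -
  define D where "D = smult (\<kappa> k) (\<phi> (Suc k)) - smult (\<kappa> (Suc k)) (pCons 0 (\<phi> k))
                       - smult (\<alpha> (Suc k)) (\<phi>s k)"
  have "coeff D 0 = 0"
    by (simp add: D_def coeff_phi_0 coeff_phis_0)
  then obtain H where H: "D = pCons 0 H"
    by (metis coeff_pCons_0 pCons_cases)
  have coeff_D: "coeff D i = 0" if "Suc k \<le> i" for i
    using that phi_deg[of k] phi_deg[of "Suc k"]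
    by (cases "i = Suc k") (auto simp: D_def coeff_phi_degree coeff_star_poly coeff_eq_0)
  have "coeff H i = 0" if "k \<le> i" for i
    using that coeff_D[of "Suc i"] by (simp add: H)
  moreover have "inner_w H (\<phi> i) = 0" if "i < k" for i
  proof -
    have deg: "degree (pCons 0 (\<phi> i)) \<le> k"
      using that degree_pCons_le[of 0 "\<phi> i"] by (simp add: phi_deg)
    have "inner_w H (\<phi> i) = inner_w D (pCons 0 (\<phi> i))"
      by (simp add: H inner_w_pCons_0)
    also have "\<dots> = \<kappa> k * inner_w (\<phi> (Suc k)) (pCons 0 (\<phi> i))
        - \<kappa> (Suc k) * inner_w (\<phi> k) (\<phi> i) - \<alpha> (Suc k) * inner_w (\<phi>s k) (pCons 0 (\<phi> i))"
      by (simp add: D_def inner_w_diff_left inner_w_smult_left inner_w_pCons_0)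
    also have "\<dots> = 0"
      using that deg by (simp add: inner_w_phi_poly_eq_0 inner_w_phi inner_w_phis_poly)
    finally show ?thesis .
  qed
  ultimately have "H = 0"
    by (rule poly_eq_0_if_orthogonal)
  then have "D = 0"
    using H by simp
  then show ?thesis
    by (metis D_def diff_diff_eq eq_iff_diff_eq_0)
qed

lemma szego_recurrence_star:
  "smult (\<kappa> k) (\<phi>s (Suc k)) = smult (\<kappa> (Suc k)) (\<phi>s k) + smult (cnj (\<alpha> (Suc k))) (pCons 0 (\<phi> k))"
proof -
  have "star_poly (Suc k) (smult (\<kappa> k) (\<phi> (Suc k)))
      = star_poly (Suc k) (smult (\<kappa> (Suc k)) (pCons 0 (\<phi> k)) + smult (\<alpha> (Suc k)) (\<phi>s k))"
    by (simp only: szego_recurrence)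
  then show ?thesis
    by (simp add: star_poly_add star_poly_smult star_poly_pCons_0 star_poly_Suc degree_star_poly_le
        star_poly_star_poly phi_deg kappa_real)
qed

lemma poly_szego_recurrence:
  "\<kappa> k * poly (\<phi> (Suc k)) x = \<kappa> (Suc k) * (x * poly (\<phi> k) x) + \<alpha> (Suc k) * poly (\<phi>s k) x"
  using arg_cong[OF szego_recurrence, of "\<lambda>p. poly p x"] by simp

lemma poly_szego_recurrence_star:
  "\<kappa> k * poly (\<phi>s (Suc k)) x = \<kappa> (Suc k) * poly (\<phi>s k) x + cnj (\<alpha> (Suc k)) * (x * poly (\<phi> k) x)"
  using arg_cong[OF szego_recurrence_star, of "\<lambda>p. poly p x"] by simp

lemma inner_w_szego_recurrence:
  "\<kappa> k * inner_w (\<phi> (Suc k)) g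
     = \<kappa> (Suc k) * inner_w (pCons 0 (\<phi> k)) g + \<alpha> (Suc k) * inner_w (\<phi>s k) g"
  using arg_cong[OF szego_recurrence, of "\<lambda>p. inner_w p g"]
  by (simp only: inner_w_add_left inner_w_smult_left)

lemma inner_w_z_phi_phis_scaled:
  "inner_w (pCons 0 (\<phi> k)) (\<phi>s k \<circ>\<^sub>p [:0, c:]) = - \<alpha> (Suc k) / \<kappa> (Suc k)"
proof -
  let ?g = "\<phi>s k \<circ>\<^sub>p [:0, c:]"
  have deg: "degree ?g \<le> k"
    using degree_pcompose_linear_le[of "\<phi>s k" c] degree_phis_le[of k] by simp
  have "\<kappa> k * inner_w (\<phi> (Suc k)) ?g
      = \<kappa> (Suc k) * inner_w (pCons 0 (\<phi> k)) ?g + \<alpha> (Suc k) * inner_w (\<phi>s k) ?g"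
    by (rule inner_w_szego_recurrence)
  moreover have "inner_w (\<phi> (Suc k)) ?g = 0"
    using deg by (simp add: inner_w_phi_poly_eq_0)
  moreover have "inner_w (\<phi>s k) ?g = 1"
    using deg kappa_nonzero[of k] by (simp add: inner_w_phis_poly coeff_pcompose_linear poly_phis_0 kappa_real)
  ultimately show ?thesis
    using kappa_nonzero[of "Suc k"] by (simp add: field_simps add_eq_0_iff)
qed

lemma kappa_Suc_sq:
  "\<kappa> (Suc k) * \<kappa> (Suc k) = \<kappa> k * \<kappa> k + \<alpha> (Suc k) * cnj (\<alpha> (Suc k))"
proof -
  have "\<kappa> k * inner_w (\<phi> (Suc k)) (pCons 0 (\<phi> k))
      = \<kappa> (Suc k) * inner_w (pCons 0 (\<phi> k)) (pCons 0 (\<phi> k)) + \<alpha> (Suc k) * inner_w (\<phi>s k) (pCons 0 (\<phi> k))"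
    by (rule inner_w_szego_recurrence)
  moreover have "inner_w (\<phi> (Suc k)) (pCons 0 (\<phi> k)) = \<kappa> k / \<kappa> (Suc k)"
    using degree_pCons_le[of 0 "\<phi> k"] by (simp add: inner_w_phi_poly phi_deg coeff_phi_degree kappa_real)
  moreover have "inner_w (\<phi>s k) (pCons 0 (\<phi> k)) = - cnj (\<alpha> (Suc k)) / \<kappa> (Suc k)"
    using inner_w_z_phi_phis_scaled[of k 1] by (simp add: inner_w_commute[of "\<phi>s k"] kappa_real)
  ultimately show ?thesis
    using kappa_nonzero[of "Suc k"] by (simp add: inner_w_pCons_0 inner_w_phi field_simps)
qed

lemma poly_szego_inverse_star:
  "\<kappa> k * poly (\<phi>s k) x = \<kappa> (Suc k) * poly (\<phi>s (Suc k)) x - cnj (\<alpha> (Suc k)) * poly (\<phi> (Suc k)) x"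
proof -
  have "\<kappa> k * (\<kappa> (Suc k) * poly (\<phi>s (Suc k)) x - cnj (\<alpha> (Suc k)) * poly (\<phi> (Suc k)) x)
      = \<kappa> (Suc k) * (\<kappa> k * poly (\<phi>s (Suc k)) x) - cnj (\<alpha> (Suc k)) * (\<kappa> k * poly (\<phi> (Suc k)) x)"
    by (simp add: algebra_simps)
  also have "\<dots> = (\<kappa> (Suc k) * \<kappa> (Suc k) - \<alpha> (Suc k) * cnj (\<alpha> (Suc k))) * poly (\<phi>s k) x"
    by (simp add: poly_szego_recurrence poly_szego_recurrence_star algebra_simps)
  also have "\<dots> = \<kappa> k * (\<kappa> k * poly (\<phi>s k) x)"
    by (simp add: kappa_Suc_sq)
  finally show ?thesis
    using kappa_nonzero[of k] by simp
qed

lemma christoffel_darboux_step: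
  "poly (\<phi>s (Suc k)) x * cnj (poly (\<phi>s (Suc k)) y) - poly (\<phi> (Suc k)) x * cnj (poly (\<phi> (Suc k)) y)
   = poly (\<phi>s k) x * cnj (poly (\<phi>s k) y) - x * cnj y * (poly (\<phi> k) x * cnj (poly (\<phi> k) y))"
proof -
  let ?K = "\<kappa> (Suc k)" and ?a = "\<alpha> (Suc k)"
  let ?s = "poly (\<phi>s k) x" and ?s' = "poly (\<phi>s k) y"
  let ?p = "x * poly (\<phi> k) x" and ?p' = "y * poly (\<phi> k) y"
  have "\<kappa> k * \<kappa> k * (poly (\<phi>s (Suc k)) x * cnj (poly (\<phi>s (Suc k)) y)
          - poly (\<phi> (Suc k)) x * cnj (poly (\<phi> (Suc k)) y))
      = (\<kappa> k * poly (\<phi>s (Suc k)) x) * cnj (\<kappa> k * poly (\<phi>s (Suc k)) y)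
          - (\<kappa> k * poly (\<phi> (Suc k)) x) * cnj (\<kappa> k * poly (\<phi> (Suc k)) y)"
    by (simp add: kappa_real algebra_simps)
  also have "\<dots> = (?K * ?s + cnj ?a * ?p) * cnj (?K * ?s' + cnj ?a * ?p')
                  - (?K * ?p + ?a * ?s) * cnj (?K * ?p' + ?a * ?s')"
    by (simp only: poly_szego_recurrence poly_szego_recurrence_star)
  also have "\<dots> = (?K * ?K - ?a * cnj ?a) * (?s * cnj ?s' - ?p * cnj ?p')"
    by (simp add: kappa_real algebra_simps)
  also have "\<dots> = \<kappa> k * \<kappa> k * (?s * cnj ?s' - x * cnj y * (poly (\<phi> k) x * cnj (poly (\<phi> k) y)))"
    by (simp add: kappa_Suc_sq mult_ac)
  finally show ?thesis
    using kappa_nonzero[of k] by simp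
qed

lemma inner_w_phi_phis_scaled: "inner_w (\<phi> k) (\<phi>s k \<circ>\<^sub>p [:0, c:]) = cnj c ^ k * \<alpha> k / \<kappa> k"
  using degree_pcompose_linear_le[of "\<phi>s k" c] degree_phis_le[of k]
  by (simp add: inner_w_phi_poly coeff_pcompose_linear coeff_phis_degree)

lemma inner_w_phi_scaled_phis: "inner_w (\<phi> k \<circ>\<^sub>p [:0, c:]) (\<phi>s k) = \<alpha> k / \<kappa> k"
  using degree_pcompose_linear_le[of "\<phi> k" c] phi_deg[of k]
  by (simp add: inner_w_commute[of _ "\<phi>s k"] inner_w_phis_poly coeff_pcompose_linear coeff_phi_0
      kappa_real)

lemma contour_integral_w_eq_inner_w:
  "contour_integral (circlepath 0 1) (\<lambda>\<zeta>. poly p \<zeta> * cnj (poly r \<zeta>) * w \<zeta> / \<zeta>) = \<i> * inner_w p r"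
proof -
  have "contour_integral (circlepath 0 1) (\<lambda>\<zeta>. poly p \<zeta> * cnj (poly r \<zeta>) * w \<zeta> / \<zeta>)
      = contour_integral (circlepath 0 1) (\<lambda>\<zeta>. \<i> * (poly p \<zeta> * cnj (poly r \<zeta>) * w \<zeta> / (\<i> * \<zeta>)))"
    by (intro contour_integral_eq) (simp add: field_simps)
  also have "\<dots> = \<i> * inner_w p r"
    unfolding inner_w_def by (rule contour_integral_lmul[OF contour_integrable_inner_w])
  finally show ?thesis .
qed

lemma poly_pcompose_linear: "poly (p \<circ>\<^sub>p [:0, c:]) \<zeta> = poly p (c * \<zeta>)"
  by (simp add: poly_pcompose mult.commute)

lemma contour_integral_w_phi_cnj_phis_scaled:
  "contour_integral (circlepath 0 1) (\<lambda>\<zeta>. w \<zeta> * (poly (\<phi> k) \<zeta> * cnj (poly (\<phi>s k) (c * \<zeta>))))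
     = - \<i> * \<alpha> (Suc k) / \<kappa> (Suc k)"
proof -
  have "contour_integral (circlepath 0 1) (\<lambda>\<zeta>. w \<zeta> * (poly (\<phi> k) \<zeta> * cnj (poly (\<phi>s k) (c * \<zeta>))))
      = contour_integral (circlepath 0 1)
          (\<lambda>\<zeta>. poly (pCons 0 (\<phi> k)) \<zeta> * cnj (poly (\<phi>s k \<circ>\<^sub>p [:0, c:]) \<zeta>) * w \<zeta> / \<zeta>)"
    by (intro contour_integral_eq) (auto simp: poly_pcompose_linear)
  also have "\<dots> = \<i> * inner_w (pCons 0 (\<phi> k)) (\<phi>s k \<circ>\<^sub>p [:0, c:])"
    by (rule contour_integral_w_eq_inner_w)
  finally show ?thesis
    by (simp add: inner_w_z_phi_phis_scaled)
qed

lemma contour_integral_w_phi_cnj_phis_scaled_div: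
  "contour_integral (circlepath 0 1) (\<lambda>\<zeta>. w \<zeta> * poly (\<phi> k) \<zeta> * cnj (poly (\<phi>s k) (c * \<zeta>)) / \<zeta>)
     = \<i> * cnj c ^ k * \<alpha> k / \<kappa> k"
proof -
  have "contour_integral (circlepath 0 1) (\<lambda>\<zeta>. w \<zeta> * poly (\<phi> k) \<zeta> * cnj (poly (\<phi>s k) (c * \<zeta>)) / \<zeta>)
      = contour_integral (circlepath 0 1)
          (\<lambda>\<zeta>. poly (\<phi> k) \<zeta> * cnj (poly (\<phi>s k \<circ>\<^sub>p [:0, c:]) \<zeta>) * w \<zeta> / \<zeta>)"
    by (intro contour_integral_eq) (simp add: poly_pcompose_linear mult_ac)
  also have "\<dots> = \<i> * inner_w (\<phi> k) (\<phi>s k \<circ>\<^sub>p [:0, c:])"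
    by (rule contour_integral_w_eq_inner_w)
  finally show ?thesis
    by (simp add: inner_w_phi_phis_scaled)
qed

lemma contour_integral_w_phi_scaled_phi:
  "contour_integral (circlepath 0 1) (\<lambda>\<zeta>. w \<zeta> * poly (\<phi> k) (c * \<zeta>) * poly (\<phi> k) \<zeta> / \<zeta> ^ Suc k)
     = \<i> * \<alpha> k / \<kappa> k"
proof -
  have "contour_integral (circlepath 0 1) (\<lambda>\<zeta>. w \<zeta> * poly (\<phi> k) (c * \<zeta>) * poly (\<phi> k) \<zeta> / \<zeta> ^ Suc k)
      = contour_integral (circlepath 0 1)
          (\<lambda>\<zeta>. poly (\<phi> k \<circ>\<^sub>p [:0, c:]) \<zeta> * cnj (poly (\<phi>s k) \<zeta>) * w \<zeta> / \<zeta>)"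
  proof (intro contour_integral_eq)
    fix \<zeta> :: complex assume "\<zeta> \<in> path_image (circlepath 0 1)"
    then have "norm \<zeta> = 1" by simp
    then have "cnj (poly (\<phi>s k) \<zeta>) = poly (\<phi> k) \<zeta> / \<zeta> ^ k"
      by (simp add: poly_phis_unit_circle cnj_unit_circle power_inverse divide_inverse)
    then show "w \<zeta> * poly (\<phi> k) (c * \<zeta>) * poly (\<phi> k) \<zeta> / \<zeta> ^ Suc k
        = poly (\<phi> k \<circ>\<^sub>p [:0, c:]) \<zeta> * cnj (poly (\<phi>s k) \<zeta>) * w \<zeta> / \<zeta>"
      by (simp add: poly_pcompose_linear field_simps)
  qed
  also have "\<dots> = \<i> * inner_w (\<phi> k \<circ>\<^sub>p [:0, c:]) (\<phi>s k)"
    by (rule contour_integral_w_eq_inner_w)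
  finally show ?thesis
    by (simp add: inner_w_phi_scaled_phis)
qed

end

section \<open>Weights analytic in the annulus\<close>

locale opuc_annulus = opuc w \<phi> for w \<phi> +
  fixes q :: real and u :: "complex \<Rightarrow> complex"
  assumes q: "0 < q" "q < 1"
    and w_hol: "w holomorphic_on annulus q"
    and w_cont_annulus: "continuous_on (cannulus q) w"
    and u_def: "\<And>x. norm x = 1 \<Longrightarrow> Dq q w x = - u (of_real q * x) * w (of_real q * x)"
    and u_hol: "u holomorphic_on annulus q"
    and u_cont: "continuous_on (cannulus q) u"
begin

abbreviation Q :: complex where "Q \<equiv> of_real q"

definition qint :: "nat \<Rightarrow> complex" where "qint k = (1 - Q ^ k) / (1 - Q)"

lemma Q_nonzero: "Q \<noteq> 0" and one_minus_Q_nonzero: "1 - Q \<noteq> 0"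
  using q by auto

lemma zero_notin_annulus: "0 \<notin> annulus q" "0 \<notin> cannulus q"
  using q by (auto simp: annulus_def cannulus_def)

lemma continuous_on_u_unit_circle: "continuous_on (sphere 0 1) u"
  using q by (intro continuous_on_subset[OF u_cont]) (auto simp: cannulus_def)

lemma continuous_on_w_scaled: "continuous_on (sphere 0 1) (\<lambda>\<zeta>. w (Q * \<zeta>))"
  using q by (intro continuous_on_compose2[OF w_cont_annulus] continuous_intros)
    (auto simp: cannulus_def norm_mult)

lemma u_mult_w_scaled:
  assumes "norm \<zeta> = 1"
  shows "u (Q * \<zeta>) * w (Q * \<zeta>) = (w (Q * \<zeta>) - w \<zeta>) / ((1 - Q) * \<zeta>)"
proof -
  have "- u (Q * \<zeta>) * w (Q * \<zeta>) = (w \<zeta> - w (Q * \<zeta>)) / (\<zeta> - Q * \<zeta>)"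
    using u_def[OF assms] unfolding Dq_def by (rule sym)
  moreover have "\<zeta> \<noteq> 0"
    using assms by auto
  ultimately show ?thesis
    using one_minus_Q_nonzero by (simp add: field_simps)
qed

lemma cnj_phis_scaled:
  assumes "norm \<zeta> = 1"
  shows "cnj (poly (\<phi>s k) (Q * \<zeta>)) = Q ^ k / \<zeta> ^ k * poly (\<phi> k) (\<zeta> / Q)"
proof -
  have "cnj (Q * \<zeta>) = Q / \<zeta>"
    using assms by (simp add: cnj_unit_circle divide_inverse)
  moreover have "\<zeta> \<noteq> 0" using assms by auto
  ultimately show ?thesis
    using Q_nonzero by (simp add: poly_star_poly phi_deg power_divide)
qed

lemma contour_integral_w_scaled_phi_scaled_phi:
  "contour_integral (circlepath 0 1)
     (\<lambda>\<zeta>. w (Q * \<zeta>) * poly (\<phi> k) (Q * \<zeta>) * poly (\<phi> k) \<zeta> / \<zeta> ^ Suc k)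
   = \<i> * Q ^ k * \<alpha> k / \<kappa> k"
proof -
  define h where "h \<zeta> = w \<zeta> * poly (\<phi> k) \<zeta> * (Q ^ k / \<zeta> ^ k * poly (\<phi> k) (\<zeta> / Q)) / \<zeta>" for \<zeta>
  have "contour_integral (circlepath 0 1)
          (\<lambda>\<zeta>. w (Q * \<zeta>) * poly (\<phi> k) (Q * \<zeta>) * poly (\<phi> k) \<zeta> / \<zeta> ^ Suc k)
      = contour_integral (circlepath 0 1) (\<lambda>\<zeta>. Q * h (Q * \<zeta>))"
    using Q_nonzero by (intro contour_integral_eq) (simp add: h_def power_mult_distrib field_simps)
  also have "\<dots> = contour_integral (circlepath 0 1) h"
    unfolding h_def using q Q_nonzero zero_notin_annulus
    by (intro contour_integral_unit_circle_annulus_rescale[symmetric] holomorphic_intros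
        continuous_intros w_hol w_cont_annulus) auto
  also have "\<dots> = contour_integral (circlepath 0 1)
                    (\<lambda>\<zeta>. w \<zeta> * poly (\<phi> k) \<zeta> * cnj (poly (\<phi>s k) (Q * \<zeta>)) / \<zeta>)"
    by (intro contour_integral_eq) (simp add: h_def cnj_phis_scaled)
  finally show ?thesis
    by (simp add: contour_integral_w_phi_cnj_phis_scaled_div)
qed

lemma contour_integral_u_w_phi_cnj_phis:
  "contour_integral (circlepath 0 1) (\<lambda>\<zeta>. u \<zeta> * w \<zeta> * (poly (\<phi> k) \<zeta> * cnj (poly (\<phi>s k) (Q * \<zeta>))))
   = - \<i> * Q * qint k * \<alpha> k / \<kappa> k"
proof -
  define f where "f \<zeta> = u \<zeta> * w \<zeta> * (poly (\<phi> k) \<zeta> * (Q ^ k / \<zeta> ^ k * poly (\<phi> k) (\<zeta> / Q)))" for \<zeta>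
  define A where "A \<zeta> = w \<zeta> * poly (\<phi> k) (Q * \<zeta>) * poly (\<phi> k) \<zeta> / \<zeta> ^ Suc k" for \<zeta>
  define B where "B \<zeta> = w (Q * \<zeta>) * poly (\<phi> k) (Q * \<zeta>) * poly (\<phi> k) \<zeta> / \<zeta> ^ Suc k" for \<zeta>
  have "contour_integral (circlepath 0 1) (\<lambda>\<zeta>. u \<zeta> * w \<zeta> * (poly (\<phi> k) \<zeta> * cnj (poly (\<phi>s k) (Q * \<zeta>))))
      = contour_integral (circlepath 0 1) f"
    by (intro contour_integral_eq) (simp add: f_def cnj_phis_scaled)
  also have "\<dots> = contour_integral (circlepath 0 1) (\<lambda>\<zeta>. Q * f (Q * \<zeta>))"
    unfolding f_def using q Q_nonzero zero_notin_annulus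
    by (intro contour_integral_unit_circle_annulus_rescale holomorphic_intros continuous_intros
        w_hol w_cont_annulus u_hol u_cont) auto
  also have "\<dots> = contour_integral (circlepath 0 1) (\<lambda>\<zeta>. - Q / (1 - Q) * (A \<zeta> - B \<zeta>))"
  proof (intro contour_integral_eq)
    fix \<zeta> :: complex assume "\<zeta> \<in> path_image (circlepath 0 1)"
    then have \<zeta>: "norm \<zeta> = 1" "\<zeta> \<noteq> 0" by auto
    show "Q * f (Q * \<zeta>) = - Q / (1 - Q) * (A \<zeta> - B \<zeta>)"
      unfolding f_def u_mult_w_scaled[OF \<zeta>(1)] A_def B_def using \<zeta> Q_nonzero one_minus_Q_nonzero
      by (simp add: power_mult_distrib field_simps)
  qed
  also have "\<dots> = - Q / (1 - Q) * (contour_integral (circlepath 0 1) A - contour_integral (circlepath 0 1) B)"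
  proof -
    have A: "A contour_integrable_on circlepath 0 1" and B: "B contour_integrable_on circlepath 0 1"
      unfolding A_def B_def using w_cont continuous_on_w_scaled
      by (auto intro!: contour_integrable_unit_circle continuous_intros)
    show ?thesis
      by (simp only: contour_integral_lmul[OF contour_integrable_diff[OF A B]] contour_integral_diff[OF A B])
  qed
  also have "\<dots> = - \<i> * Q * qint k * \<alpha> k / \<kappa> k"
    unfolding A_def B_def contour_integral_w_phi_scaled_phi contour_integral_w_scaled_phi_scaled_phi
    using one_minus_Q_nonzero kappa_nonzero[of k] by (simp add: qint_def field_simps)
  finally show ?thesis .
qed

definition kernel :: "complex \<Rightarrow> complex \<Rightarrow> complex" where
  "kernel y \<zeta> = (u \<zeta> - u y) / (\<zeta> - y) * w \<zeta>"

definition \<Lambda> :: "complex \<Rightarrow> (complex \<Rightarrow> complex) \<Rightarrow> complex" where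
  "\<Lambda> y F = contour_integral (circlepath 0 1) (\<lambda>\<zeta>. kernel y \<zeta> * F \<zeta>)"

lemma has_contour_integral_kernel:
  assumes "y \<in> annulus q" "continuous_on (sphere 0 1) F"
  shows "((\<lambda>\<zeta>. kernel y \<zeta> * F \<zeta>) has_contour_integral \<Lambda> y F) (circlepath 0 1)"
proof -
  have "y \<notin> sphere 0 1"
    using assms(1) by (auto simp: annulus_def)
  then have "continuous_on (sphere 0 1) (\<lambda>\<zeta>. kernel y \<zeta> * F \<zeta>)"
    unfolding kernel_def using assms(2) continuous_on_u_unit_circle w_cont
    by (intro continuous_intros) auto
  then show ?thesis
    unfolding \<Lambda>_def by (intro has_contour_integral_integral contour_integrable_unit_circle)
qed

definition integrandA :: "nat \<Rightarrow> complex \<Rightarrow> complex" where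
  "integrandA k \<zeta> = poly (\<phi> k) \<zeta> * cnj (poly (\<phi>s k) (Q * \<zeta>))"

definition integrandB :: "nat \<Rightarrow> complex \<Rightarrow> complex" where
  "integrandB k \<zeta> = poly (\<phi> k) \<zeta> * (cnj (poly (\<phi> k) (Q * \<zeta>)) - \<kappa> k / \<alpha> k * cnj (poly (\<phi>s k) (Q * \<zeta>)))"

lemma continuous_on_integrandA: "continuous_on S (integrandA k)"
  unfolding integrandA_def by (intro continuous_intros)

lemma continuous_on_integrandB: "continuous_on S (integrandB k)"
  unfolding integrandB_def by (intro continuous_intros)

lemma coefA_eq:
  "coefA q w u \<phi> k z = \<kappa> (k - 1) / \<kappa> k * qint k + \<i> * \<kappa> (k - 1) / \<alpha> k * z * \<Lambda> (Q * z) (integrandA k)"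
  unfolding coefA_def qint_def \<Lambda>_def kernel_def integrandA_def pstar_phi by (simp add: mult_ac)

lemma coefB_eq: "coefB q w u \<phi> k z = - \<i> * \<Lambda> (Q * z) (integrandB k)"
  unfolding coefB_def \<Lambda>_def kernel_def integrandB_def pstar_phi by (simp add: mult_ac)

lemma coefM1_eq:
  assumes "Q * z \<in> annulus q"
  shows "coefM1 q w u z = - \<i> * \<Lambda> (Q * z) (\<lambda>_. 1)"
proof -
  have "((\<lambda>\<zeta>. - \<i> * (kernel (Q * z) \<zeta> * 1)) has_contour_integral
          - \<i> * \<Lambda> (Q * z) (\<lambda>_. 1)) (circlepath 0 1)"
    using assms by (intro has_contour_integral_lmul has_contour_integral_kernel continuous_intros)
  then have "((\<lambda>\<zeta>. \<zeta> * ((u \<zeta> - u (Q * z)) / (\<zeta> - Q * z)) * w \<zeta> / (\<i> * \<zeta>)) has_contour_integral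
          - \<i> * \<Lambda> (Q * z) (\<lambda>_. 1)) (circlepath 0 1)"
  proof (rule has_contour_integral_eq)
    fix \<zeta> assume "\<zeta> \<in> path_image (circlepath 0 1)"
    then have "\<zeta> \<noteq> 0" "\<zeta> \<noteq> Q * z"
      using assms by (auto simp: annulus_def)
    then show "- \<i> * (kernel (Q * z) \<zeta> * 1)
        = \<zeta> * ((u \<zeta> - u (Q * z)) / (\<zeta> - Q * z)) * w \<zeta> / (\<i> * \<zeta>)"
      by (simp add: kernel_def field_simps)
  qed
  then show ?thesis
    unfolding coefM1_def by (rule contour_integral_unique)
qed

lemma kernel_integral_z_integrandA:
  assumes y: "y \<in> annulus q"
  shows "\<Lambda> y (\<lambda>\<zeta>. \<zeta> * integrandA k \<zeta>)
       = y * \<Lambda> y (integrandA k) - \<i> * Q * qint k * \<alpha> k / \<kappa> k + \<i> * u y * \<alpha> (Suc k) / \<kappa> (Suc k)"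
proof -
  have cont_uw: "continuous_on (sphere 0 1) (\<lambda>\<zeta>. u \<zeta> * w \<zeta> * integrandA k \<zeta>)"
    and cont_w: "continuous_on (sphere 0 1) (\<lambda>\<zeta>. w \<zeta> * integrandA k \<zeta>)"
    using continuous_on_u_unit_circle w_cont continuous_on_integrandA
    by (auto intro!: continuous_intros)
  have "((\<lambda>\<zeta>. u \<zeta> * w \<zeta> * integrandA k \<zeta>) has_contour_integral
          - \<i> * Q * qint k * \<alpha> k / \<kappa> k) (circlepath 0 1)"
    using has_contour_integral_integral[OF contour_integrable_unit_circle[OF cont_uw]]
    by (simp add: integrandA_def contour_integral_u_w_phi_cnj_phis)
  moreover have "((\<lambda>\<zeta>. w \<zeta> * integrandA k \<zeta>) has_contour_integral
          - \<i> * \<alpha> (Suc k) / \<kappa> (Suc k)) (circlepath 0 1)"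
    using has_contour_integral_integral[OF contour_integrable_unit_circle[OF cont_w]]
    by (simp add: integrandA_def contour_integral_w_phi_cnj_phis_scaled)
  ultimately have "((\<lambda>\<zeta>. y * (kernel y \<zeta> * integrandA k \<zeta>)
          + (u \<zeta> * w \<zeta> * integrandA k \<zeta> - u y * (w \<zeta> * integrandA k \<zeta>))) has_contour_integral
        y * \<Lambda> y (integrandA k) + (- \<i> * Q * qint k * \<alpha> k / \<kappa> k - u y * (- \<i> * \<alpha> (Suc k) / \<kappa> (Suc k))))
        (circlepath 0 1)"
    by (intro has_contour_integral_add has_contour_integral_diff has_contour_integral_lmul
        has_contour_integral_kernel y continuous_on_integrandA)
  then have "((\<lambda>\<zeta>. kernel y \<zeta> * (\<zeta> * integrandA k \<zeta>)) has_contour_integral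
        y * \<Lambda> y (integrandA k) + (- \<i> * Q * qint k * \<alpha> k / \<kappa> k - u y * (- \<i> * \<alpha> (Suc k) / \<kappa> (Suc k))))
        (circlepath 0 1)"
  proof (rule has_contour_integral_eq)
    fix \<zeta> assume "\<zeta> \<in> path_image (circlepath 0 1)"
    then have "\<zeta> \<noteq> y" using y by (auto simp: annulus_def)
    then show "y * (kernel y \<zeta> * integrandA k \<zeta>)
          + (u \<zeta> * w \<zeta> * integrandA k \<zeta> - u y * (w \<zeta> * integrandA k \<zeta>))
        = kernel y \<zeta> * (\<zeta> * integrandA k \<zeta>)"
      by (simp add: kernel_def field_simps)
  qed
  moreover have "((\<lambda>\<zeta>. kernel y \<zeta> * (\<zeta> * integrandA k \<zeta>)) has_contour_integral
        \<Lambda> y (\<lambda>\<zeta>. \<zeta> * integrandA k \<zeta>)) (circlepath 0 1)"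
    using y continuous_on_integrandA by (intro has_contour_integral_kernel continuous_intros)
  ultimately show ?thesis
    by (auto dest: has_contour_integral_unique simp: algebra_simps)
qed

lemma integrandB_eq: "integrandB k \<zeta> = poly (\<phi> k) \<zeta> * cnj (poly (\<phi> k) (Q * \<zeta>)) - \<kappa> k / \<alpha> k * integrandA k \<zeta>"
  by (simp add: integrandB_def integrandA_def algebra_simps)

lemma integrandB_Suc:
  assumes "\<alpha> (Suc j) \<noteq> 0"
  shows "integrandB (Suc j) \<zeta> = - \<kappa> j / \<alpha> (Suc j) * poly (\<phi> (Suc j)) \<zeta> * cnj (poly (\<phi>s j) (Q * \<zeta>))"
proof -
  let ?R = "\<lambda>i. cnj (poly (\<phi>s i) (Q * \<zeta>))" and ?S = "cnj (poly (\<phi> (Suc j)) (Q * \<zeta>))"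
  have inverse_star: "\<kappa> j * ?R j = \<kappa> (Suc j) * ?R (Suc j) - \<alpha> (Suc j) * ?S"
    using arg_cong[OF poly_szego_inverse_star[of j "Q * \<zeta>"], of cnj] by (simp add: kappa_real)
  have "integrandB (Suc j) \<zeta> = poly (\<phi> (Suc j)) \<zeta> * ((\<alpha> (Suc j) * ?S - \<kappa> (Suc j) * ?R (Suc j)) / \<alpha> (Suc j))"
    using assms by (simp add: integrandB_def field_simps)
  also have "\<dots> = poly (\<phi> (Suc j)) \<zeta> * (- (\<kappa> j * ?R j) / \<alpha> (Suc j))"
    unfolding inverse_star by simp
  finally show ?thesis by simp
qed

lemma christoffel_darboux_step_scaled:
  assumes "norm \<zeta> = 1"
  shows "poly (\<phi>s (Suc k)) \<zeta> * cnj (poly (\<phi>s (Suc k)) (Q * \<zeta>))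
           - poly (\<phi> (Suc k)) \<zeta> * cnj (poly (\<phi> (Suc k)) (Q * \<zeta>))
         = poly (\<phi>s k) \<zeta> * cnj (poly (\<phi>s k) (Q * \<zeta>)) - Q * (poly (\<phi> k) \<zeta> * cnj (poly (\<phi> k) (Q * \<zeta>)))"
proof -
  have "\<zeta> * cnj (Q * \<zeta>) = Q"
    using assms complex_norm_square[of \<zeta>] by (simp add: mult_ac)
  then show ?thesis
    using christoffel_darboux_step[of k \<zeta> "Q * \<zeta>"] by simp
qed

lemma integrand_step:
  assumes \<zeta>: "norm \<zeta> = 1" and \<alpha>1: "\<alpha> (Suc j) \<noteq> 0" and \<alpha>2: "\<alpha> (Suc (Suc j)) \<noteq> 0"
  shows "integrandB (Suc (Suc j)) \<zeta>
       = Q * integrandB j \<zeta> + Q * (\<kappa> j / \<alpha> j) * integrandA j \<zeta>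
         - \<kappa> (Suc j) / \<alpha> (Suc j) * integrandA (Suc j) \<zeta>
         - \<kappa> (Suc (Suc j)) / \<alpha> (Suc (Suc j)) * (\<zeta> * integrandA (Suc j) \<zeta>)
         + \<kappa> (Suc j) / \<alpha> (Suc j) * (\<zeta> * integrandA j \<zeta>)"
    (is "_ = ?rhs")
proof -
  define P where "P i = poly (\<phi> i) \<zeta>" for i
  define Ps where "Ps i = poly (\<phi>s i) \<zeta>" for i
  define R where "R i = cnj (poly (\<phi>s i) (Q * \<zeta>))" for i
  define S where "S i = cnj (poly (\<phi> i) (Q * \<zeta>))" for i
  have A: "integrandA i \<zeta> = P i * R i" for i
    by (simp add: integrandA_def P_def R_def)
  have B: "integrandB i \<zeta> = P i * S i - \<kappa> i / \<alpha> i * (P i * R i)" for i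
    by (simp add: integrandB_eq A P_def S_def)
  have B_Suc: "integrandB (Suc i) \<zeta> = - \<kappa> i / \<alpha> (Suc i) * (P (Suc i) * R i)"
    if "\<alpha> (Suc i) \<noteq> 0" for i
    using integrandB_Suc[OF that] by (simp add: P_def R_def mult_ac)
  have P_Suc: "P (Suc i) = (\<kappa> (Suc i) * (\<zeta> * P i) + \<alpha> (Suc i) * Ps i) / \<kappa> i" for i
    using poly_szego_recurrence[of i \<zeta>] kappa_nonzero[of i] by (simp add: P_def Ps_def field_simps)
  have CD: "Ps (Suc j) * R (Suc j) = P (Suc j) * S (Suc j) + Ps j * R j - Q * (P j * S j)"
    using christoffel_darboux_step_scaled[OF \<zeta>, of j]
    by (simp add: P_def Ps_def R_def S_def diff_eq_eq algebra_simps)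
  have "?rhs - integrandB (Suc (Suc j)) \<zeta>
      = Q * (P j * S j) + Ps (Suc j) * R (Suc j) - \<kappa> (Suc j) / \<alpha> (Suc j) * (P (Suc j) * R (Suc j))
        + \<zeta> * (\<kappa> (Suc j) / \<alpha> (Suc j)) * (P j * R j)"
    unfolding B_Suc[OF \<alpha>2] P_Suc[of "Suc j"] unfolding A B
    using \<alpha>2 kappa_nonzero[of "Suc j"] by (simp add: field_simps)
  also have "\<dots> = integrandB (Suc j) \<zeta> + R j * (Ps j + \<zeta> * (\<kappa> (Suc j) / \<alpha> (Suc j)) * P j)"
    unfolding CD B by (simp add: algebra_simps)
  also have "\<dots> = 0"
    unfolding B_Suc[OF \<alpha>1] P_Suc[of j] using \<alpha>1 kappa_nonzero[of j] by (simp add: field_simps)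
  finally show ?thesis by simp
qed

lemma integrand_base:
  assumes \<zeta>: "norm \<zeta> = 1" and \<alpha>1: "\<alpha> 1 \<noteq> 0" and \<alpha>2: "\<alpha> 2 \<noteq> 0"
  shows "integrandB 2 \<zeta> = - integrandB 1 \<zeta> - \<kappa> 1 / \<alpha> 1 * integrandA 1 \<zeta> - (1 - Q)
           - \<kappa> 2 / \<alpha> 2 * (\<zeta> * integrandA 1 \<zeta>)"
    (is "_ = ?rhs")
proof -
  define P where "P i = poly (\<phi> i) \<zeta>" for i
  define R where "R = cnj (poly (\<phi>s 1) (Q * \<zeta>))"
  define S where "S = cnj (poly (\<phi> 1) (Q * \<zeta>))"
  have CD: "poly (\<phi>s 1) \<zeta> * R = P 1 * S + 1 - Q"
    using christoffel_darboux_step_scaled[OF \<zeta>, of 0]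
    by (simp add: P_def R_def S_def phi_0 star_poly_0_one diff_eq_eq algebra_simps)
  have P2: "P 2 = (\<kappa> 2 * (\<zeta> * P 1) + \<alpha> 2 * poly (\<phi>s 1) \<zeta>) / \<kappa> 1"
    using poly_szego_recurrence[of 1 \<zeta>] kappa_nonzero[of 1]
    by (simp add: P_def numeral_2_eq_2 field_simps)
  have B2: "integrandB 2 \<zeta> = - \<kappa> 1 / \<alpha> 2 * (P 2 * R)"
    using integrandB_Suc[of 1 \<zeta>] \<alpha>2 by (simp add: P_def R_def numeral_2_eq_2 mult_ac)
  have "?rhs - integrandB 2 \<zeta> = poly (\<phi>s 1) \<zeta> * R - P 1 * S - (1 - Q)"
    unfolding B2 P2 unfolding integrandB_eq integrandA_def using \<alpha>2 kappa_nonzero[of 1]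
    by (simp add: P_def R_def S_def field_simps)
  also have "\<dots> = 0"
    unfolding CD by simp
  finally show ?thesis by simp
qed

lemma kernel_integral_step:
  assumes y: "y \<in> annulus q" and \<alpha>1: "\<alpha> (Suc j) \<noteq> 0" and \<alpha>2: "\<alpha> (Suc (Suc j)) \<noteq> 0"
  shows "\<Lambda> y (integrandB (Suc (Suc j)))
       = Q * \<Lambda> y (integrandB j) + Q * (\<kappa> j / \<alpha> j) * \<Lambda> y (integrandA j)
         - \<kappa> (Suc j) / \<alpha> (Suc j) * \<Lambda> y (integrandA (Suc j))
         - \<kappa> (Suc (Suc j)) / \<alpha> (Suc (Suc j)) * \<Lambda> y (\<lambda>\<zeta>. \<zeta> * integrandA (Suc j) \<zeta>)
         + \<kappa> (Suc j) / \<alpha> (Suc j) * \<Lambda> y (\<lambda>\<zeta>. \<zeta> * integrandA j \<zeta>)"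
proof -
  have A: "((\<lambda>\<zeta>. kernel y \<zeta> * integrandA i \<zeta>) has_contour_integral \<Lambda> y (integrandA i)) (circlepath 0 1)"
    and B: "((\<lambda>\<zeta>. kernel y \<zeta> * integrandB i \<zeta>) has_contour_integral \<Lambda> y (integrandB i)) (circlepath 0 1)"
    and zA: "((\<lambda>\<zeta>. kernel y \<zeta> * (\<zeta> * integrandA i \<zeta>)) has_contour_integral \<Lambda> y (\<lambda>\<zeta>. \<zeta> * integrandA i \<zeta>))
               (circlepath 0 1)" for i
    by (intro has_contour_integral_kernel[OF y] continuous_intros continuous_on_integrandA
        continuous_on_integrandB)+
  have "((\<lambda>\<zeta>. Q * (kernel y \<zeta> * integrandB j \<zeta>) + Q * (\<kappa> j / \<alpha> j) * (kernel y \<zeta> * integrandA j \<zeta>)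
            - \<kappa> (Suc j) / \<alpha> (Suc j) * (kernel y \<zeta> * integrandA (Suc j) \<zeta>)
            - \<kappa> (Suc (Suc j)) / \<alpha> (Suc (Suc j)) * (kernel y \<zeta> * (\<zeta> * integrandA (Suc j) \<zeta>))
            + \<kappa> (Suc j) / \<alpha> (Suc j) * (kernel y \<zeta> * (\<zeta> * integrandA j \<zeta>))) has_contour_integral
        Q * \<Lambda> y (integrandB j) + Q * (\<kappa> j / \<alpha> j) * \<Lambda> y (integrandA j)
         - \<kappa> (Suc j) / \<alpha> (Suc j) * \<Lambda> y (integrandA (Suc j))
         - \<kappa> (Suc (Suc j)) / \<alpha> (Suc (Suc j)) * \<Lambda> y (\<lambda>\<zeta>. \<zeta> * integrandA (Suc j) \<zeta>)
         + \<kappa> (Suc j) / \<alpha> (Suc j) * \<Lambda> y (\<lambda>\<zeta>. \<zeta> * integrandA j \<zeta>)) (circlepath 0 1)"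
    by (intro has_contour_integral_add has_contour_integral_diff has_contour_integral_lmul A B zA)
  then have "((\<lambda>\<zeta>. kernel y \<zeta> * integrandB (Suc (Suc j)) \<zeta>) has_contour_integral
        Q * \<Lambda> y (integrandB j) + Q * (\<kappa> j / \<alpha> j) * \<Lambda> y (integrandA j)
         - \<kappa> (Suc j) / \<alpha> (Suc j) * \<Lambda> y (integrandA (Suc j))
         - \<kappa> (Suc (Suc j)) / \<alpha> (Suc (Suc j)) * \<Lambda> y (\<lambda>\<zeta>. \<zeta> * integrandA (Suc j) \<zeta>)
         + \<kappa> (Suc j) / \<alpha> (Suc j) * \<Lambda> y (\<lambda>\<zeta>. \<zeta> * integrandA j \<zeta>)) (circlepath 0 1)"
    by (rule has_contour_integral_eq) (simp add: integrand_step[OF _ \<alpha>1 \<alpha>2] algebra_simps)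
  with B show ?thesis
    by (rule has_contour_integral_unique)
qed

lemma kernel_integral_base:
  assumes y: "y \<in> annulus q" and \<alpha>1: "\<alpha> 1 \<noteq> 0" and \<alpha>2: "\<alpha> 2 \<noteq> 0"
  shows "\<Lambda> y (integrandB 2) = - \<Lambda> y (integrandB 1) - \<kappa> 1 / \<alpha> 1 * \<Lambda> y (integrandA 1)
           - (1 - Q) * \<Lambda> y (\<lambda>_. 1) - \<kappa> 2 / \<alpha> 2 * \<Lambda> y (\<lambda>\<zeta>. \<zeta> * integrandA 1 \<zeta>)"
proof -
  have A: "((\<lambda>\<zeta>. kernel y \<zeta> * integrandA i \<zeta>) has_contour_integral \<Lambda> y (integrandA i)) (circlepath 0 1)"
    and B: "((\<lambda>\<zeta>. kernel y \<zeta> * integrandB i \<zeta>) has_contour_integral \<Lambda> y (integrandB i)) (circlepath 0 1)"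
    and zA: "((\<lambda>\<zeta>. kernel y \<zeta> * (\<zeta> * integrandA i \<zeta>)) has_contour_integral \<Lambda> y (\<lambda>\<zeta>. \<zeta> * integrandA i \<zeta>))
               (circlepath 0 1)"
    and one: "((\<lambda>\<zeta>. kernel y \<zeta> * 1) has_contour_integral \<Lambda> y (\<lambda>_. 1)) (circlepath 0 1)" for i
    by (intro has_contour_integral_kernel[OF y] continuous_intros continuous_on_integrandA
        continuous_on_integrandB)+
  have "((\<lambda>\<zeta>. - (kernel y \<zeta> * integrandB 1 \<zeta>) - \<kappa> 1 / \<alpha> 1 * (kernel y \<zeta> * integrandA 1 \<zeta>)
            - (1 - Q) * (kernel y \<zeta> * 1) - \<kappa> 2 / \<alpha> 2 * (kernel y \<zeta> * (\<zeta> * integrandA 1 \<zeta>))) has_contour_integral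
        - \<Lambda> y (integrandB 1) - \<kappa> 1 / \<alpha> 1 * \<Lambda> y (integrandA 1)
           - (1 - Q) * \<Lambda> y (\<lambda>_. 1) - \<kappa> 2 / \<alpha> 2 * \<Lambda> y (\<lambda>\<zeta>. \<zeta> * integrandA 1 \<zeta>)) (circlepath 0 1)"
    by (intro has_contour_integral_neg has_contour_integral_diff has_contour_integral_lmul A B zA one)
  then have "((\<lambda>\<zeta>. kernel y \<zeta> * integrandB 2 \<zeta>) has_contour_integral
        - \<Lambda> y (integrandB 1) - \<kappa> 1 / \<alpha> 1 * \<Lambda> y (integrandA 1)
           - (1 - Q) * \<Lambda> y (\<lambda>_. 1) - \<kappa> 2 / \<alpha> 2 * \<Lambda> y (\<lambda>\<zeta>. \<zeta> * integrandA 1 \<zeta>)) (circlepath 0 1)"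
    by (rule has_contour_integral_eq) (simp add: integrand_base[OF _ \<alpha>1 \<alpha>2] algebra_simps)
  with B show ?thesis
    by (rule has_contour_integral_unique)
qed

definition ladder_lhs :: "complex \<Rightarrow> nat \<Rightarrow> complex" where
  "ladder_lhs z n = coefB q w u \<phi> n z + coefB q w u \<phi> (n - 1) z
     - \<kappa> (n - 1) / \<kappa> (n - 2) * coefA q w u \<phi> (n - 1) z / z
     - \<kappa> n / \<kappa> (n - 2) * (\<alpha> (n - 1) / \<alpha> n) * coefA q w u \<phi> (n - 1) z"

definition ladder_rhs :: "complex \<Rightarrow> nat \<Rightarrow> complex" where
  "ladder_rhs z n = - of_nat (n - 1) / (Q * z) - u (Q * z) / Q
     - (1 - Q) / Q * ((coefB q w u \<phi> 1 z + coefM1 q w u z)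
        + (\<Sum>j = 1..n - 1. coefB q w u \<phi> (j + 1) z - \<kappa> j / \<kappa> (j - 1) * coefA q w u \<phi> j z / z))"

lemma ladder_rhs_Suc:
  assumes "1 \<le> n"
  shows "ladder_rhs z (Suc n) = ladder_rhs z n - 1 / (Q * z)
           - (1 - Q) / Q * (coefB q w u \<phi> (Suc n) z - \<kappa> n / \<kappa> (n - 1) * coefA q w u \<phi> n z / z)"
proof -
  obtain m where m: "n = Suc m"
    using assms by (cases n) auto
  show ?thesis
    unfolding ladder_rhs_def m
    by (simp add: sum.cl_ivl_Suc algebra_simps add_divide_distrib diff_divide_distrib)
qed

lemma qint_Suc: "qint (Suc k) = 1 + Q * qint k"
  using one_minus_Q_nonzero by (simp add: qint_def field_simps)

lemma ladder_lhs_Suc: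
  assumes y: "Q * z \<in> annulus q" and n: "2 \<le> n"
    and \<alpha>: "\<alpha> (n - 1) \<noteq> 0" "\<alpha> n \<noteq> 0" "\<alpha> (Suc n) \<noteq> 0"
  shows "ladder_lhs z (Suc n) = ladder_lhs z n - 1 / (Q * z)
           - (1 - Q) / Q * (coefB q w u \<phi> (Suc n) z - \<kappa> n / \<kappa> (n - 1) * coefA q w u \<phi> n z / z)"
proof -
  obtain i where i: "n = Suc (Suc i)"
    using n by (metis add_2_eq_Suc le_Suc_ex)
  have z: "z \<noteq> 0"
    using y q by (auto simp: annulus_def)
  have \<alpha>': "\<alpha> (Suc i) \<noteq> 0" "\<alpha> (Suc (Suc i)) \<noteq> 0" "\<alpha> (Suc (Suc (Suc i))) \<noteq> 0"
    using \<alpha> by (simp_all add: i)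
  show ?thesis
    using \<alpha>' z Q_nonzero one_minus_Q_nonzero kappa_nonzero
    unfolding i ladder_lhs_def coefA_eq coefB_eq kernel_integral_step[OF y \<alpha>'(2,3)]
    unfolding kernel_integral_z_integrandA[OF y]
    by (simp add: qint_Suc field_simps)
qed

lemma ladder_base:
  assumes y: "Q * z \<in> annulus q" and \<alpha>1: "\<alpha> 1 \<noteq> 0" and \<alpha>2: "\<alpha> 2 \<noteq> 0"
  shows "ladder_lhs z 2 = ladder_rhs z 2"
proof -
  have z: "z \<noteq> 0"
    using y q by (auto simp: annulus_def)
  have lhs: "ladder_lhs z 2 = coefB q w u \<phi> 2 z + coefB q w u \<phi> 1 z
      - \<kappa> 1 * coefA q w u \<phi> 1 z / z - \<kappa> 2 * (\<alpha> 1 / \<alpha> 2) * coefA q w u \<phi> 1 z"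
    by (simp add: ladder_lhs_def kappa_0)
  have rhs: "ladder_rhs z 2 = - 1 / (Q * z) - u (Q * z) / Q
      - (1 - Q) / Q * ((coefB q w u \<phi> 1 z + coefM1 q w u z) + (coefB q w u \<phi> 2 z - \<kappa> 1 * coefA q w u \<phi> 1 z / z))"
    by (simp add: ladder_rhs_def kappa_0 numeral_2_eq_2)
  have "qint 1 = 1"
    using one_minus_Q_nonzero by (simp add: qint_def)
  then show ?thesis
    using \<alpha>1 \<alpha>2 z Q_nonzero one_minus_Q_nonzero kappa_nonzero
    unfolding lhs rhs coefA_eq coefB_eq coefM1_eq[OF y]
    unfolding kernel_integral_base[OF y \<alpha>1 \<alpha>2] kernel_integral_z_integrandA[OF y]
    by (simp add: kappa_0 numeral_2_eq_2 field_simps)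
qed

lemma ladder_eq:
  assumes y: "Q * z \<in> annulus q" and "2 \<le> n" and \<alpha>: "\<And>k. 1 \<le> k \<Longrightarrow> k \<le> n \<Longrightarrow> \<alpha> k \<noteq> 0"
  shows "ladder_lhs z n = ladder_rhs z n"
  using \<open>2 \<le> n\<close> \<alpha>
proof (induction n rule: nat_induct_at_least)
  case base
  then show ?case
    using ladder_base[OF y] by simp
next
  case (Suc n)
  then show ?case
    by (simp add: ladder_lhs_Suc[OF y] ladder_rhs_Suc)
qed

end

theorem theorem4p2:
  fixes q :: real and w u :: "complex \<Rightarrow> complex" and \<phi> :: "nat \<Rightarrow> complex poly"
    and n :: nat and z :: complex
  assumes q: "0 < q" "q < 1"
    and w_pos: "\<And>\<zeta>. norm \<zeta> = 1 \<Longrightarrow> w \<zeta> \<in> \<real> \<and> 0 < Re (w \<zeta>)"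
    and w_hol: "w holomorphic_on annulus q"
    and w_cont: "continuous_on (cannulus q) w"
    and w_norm: "contour_integral (circlepath 0 1) (\<lambda>\<zeta>. w \<zeta> / (\<i> * \<zeta>)) = 1"
    and phi_deg: "\<And>m. degree (\<phi> m) = m"
    and phi_lead: "\<And>m. lead_coeff (\<phi> m) \<in> \<real> \<and> 0 < Re (lead_coeff (\<phi> m))"
    and phi_orth: "\<And>m k. contour_integral (circlepath 0 1)
                      (\<lambda>\<zeta>. poly (\<phi> m) \<zeta> * cnj (poly (\<phi> k) \<zeta>) * w \<zeta> / (\<i> * \<zeta>))
                    = (if m = k then 1 else 0)"
    and u_def: "\<And>x. norm x = 1 \<Longrightarrow> Dq q w x = - u (of_real q * x) * w (of_real q * x)"
    and u_hol: "u holomorphic_on annulus q"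
    and u_cont: "continuous_on (cannulus q) u"
    and n: "2 \<le> n"
    and phi0: "\<And>k. 1 \<le> k \<Longrightarrow> k \<le> n \<Longrightarrow> poly (\<phi> k) 0 \<noteq> 0"
    and z: "of_real q * z \<in> annulus q"
  shows "coefB q w u \<phi> n z + coefB q w u \<phi> (n - 1) z
           - kap \<phi> (n - 1) / kap \<phi> (n - 2) * coefA q w u \<phi> (n - 1) z / z
           - kap \<phi> n / kap \<phi> (n - 2) * (poly (\<phi> (n - 1)) 0 / poly (\<phi> n) 0)
               * coefA q w u \<phi> (n - 1) z
         = - of_nat (n - 1) / (of_real q * z) - u (of_real q * z) / of_real q
           - (1 - of_real q) / of_real q *
             ((coefB q w u \<phi> 1 z + coefM1 q w u z)
              + (\<Sum>j = 1..n - 1. coefB q w u \<phi> (j + 1) z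
                   - kap \<phi> j / kap \<phi> (j - 1) * coefA q w u \<phi> j z / z))"
proof -
  interpret opuc_annulus w \<phi> q u
    using q w_hol w_cont w_norm phi_deg phi_lead phi_orth u_def u_hol u_cont
    by unfold_locales (auto simp: w_pos cannulus_def intro: continuous_on_subset[OF w_cont])
  have "ladder_lhs z n = ladder_rhs z n"
    by (rule ladder_eq[OF z n phi0])
  then show ?thesis
    unfolding ladder_lhs_def ladder_rhs_def .
qed

end
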